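(* Let $\mathcal{S}$ be the ZCA-cor or the Cholesky whitening process, and let $\mathcal{D}$ be a Zolotarev ideal divergence. Then $\mathcal{D}_\mathcal{S}$ restricted to $\mathcal{P}_{\mathbf I}(\mathbb{R}^n)$ satisfies $$\mathcal{D}_\mathcal{S}(X+Z,Y+W)\le\mathcal{D}_\mathcal{S}(X,Y)+\mathcal{D}_\mathcal{S}(Z,W)$$ for all random vectors $X,Y,Z,W$ with identity covariance such that $X$ and $Z$ are independent and $Y$ and $W$ are independent.
   Context: $\mathcal{P}_{\mathbf I}(\mathbb{R}^n)$ is the set of probability measures on $\mathbb{R}^n$ with identity covariance; random vectors are identified with their laws. A linear whitening process maps $X$ (with invertible covariance $\Sigma$) to $W_XX$. Cholesky whitening: $W_X=L^T$, where $L$ is the unique lower triangular matrix with positive diagonal such that $LL^T=\Sigma^{-1}$. ZCA-cor whitening: $W_X=P^{-1/2}V^{-1/2}$, $P$ the correlation matrix of $X$, $V=\mathrm{diag}(\mathrm{Var}(X_1),\dots,\mathrm{Var}(X_n))$, with the square root chosen so that $W_X=\mathbf I$ whenever $X$ has identity covariance (in particular the square root of $\mathbf I$ is $\mathbf I$). $\mathcal{D}_\mathcal{S}(X,Y)=\mathcal{D}(\mathcal{S}(X),\mathcal{S}(Y))$. A divergence $\mathcal{D}$ is Zolotarev ideal if (i) $\mathcal{D}(X+Z,Y+W)\le\mathcal{D}(X,Y)+\mathcal{D}(Z,W)$ whenever $Z$ is independent of $X$ and $W$ is independent of $Y$, and (ii) $\mathcal{D}(cX,cY)=|c|\mathcal{D}(X,Y)$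 for all $X,Y$ and $c\in\mathbb{R}$. *)

theory Defs
  imports "HOL-Probability.Probability"
begin

text \<open>Laws of random vectors in R^n (index type 'n): Borel probability measures.\<close>
definition is_law :: "(real^'n) measure \<Rightarrow> bool" where
  "is_law \<mu> \<longleftrightarrow> prob_space \<mu> \<and> sets \<mu> = sets borel"

text \<open>Law of X + Z for independent X ~ mu, Z ~ nu (convolution).\<close>
definition law_sum :: "(real^'n) measure \<Rightarrow> (real^'n) measure \<Rightarrow> (real^'n) measure" where
  "law_sum \<mu> \<nu> = distr (\<mu> \<Otimes>\<^sub>M \<nu>) borel (\<lambda>(x, y). x + y)"

definition law_lin :: "real^'n^'n \<Rightarrow> (real^'n) measure \<Rightarrow> (real^'n) measure" where
  "law_lin A \<mu> = distr \<mu> borel (\<lambda>x. A *v x)"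

definition law_scale :: "real \<Rightarrow> (real^'n) measure \<Rightarrow> (real^'n) measure" where
  "law_scale c \<mu> = distr \<mu> borel (\<lambda>x. c *\<^sub>R x)"

definition mean_vec :: "(real^'n) measure \<Rightarrow> real^'n" where
  "mean_vec \<mu> = (\<chi> i. \<integral>x. x $ i \<partial>\<mu>)"

definition cov_mat :: "(real^'n) measure \<Rightarrow> real^'n^'n" where
  "cov_mat \<mu> = (\<chi> i j. \<integral>x. (x $ i - mean_vec \<mu> $ i) * (x $ j - mean_vec \<mu> $ j) \<partial>\<mu>)"

definition finite_second_moments :: "(real^'n) measure \<Rightarrow> bool" where
  "finite_second_moments \<mu> \<longleftrightarrow> (\<forall>i. integrable \<mu> (\<lambda>x. (x $ i)\<^sup>2))"

definition identity_cov :: "(real^'n) measure \<Rightarrow> bool" where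
  "identity_cov \<mu> \<longleftrightarrow> is_law \<mu> \<and> finite_second_moments \<mu> \<and> cov_mat \<mu> = mat 1"

definition pos_def_mat :: "real^'n^'n \<Rightarrow> bool" where
  "pos_def_mat B \<longleftrightarrow> (\<forall>x. x \<noteq> 0 \<longrightarrow> x \<bullet> (B *v x) > 0)"

definition mat_sqrt :: "real^'n^'n \<Rightarrow> real^'n^'n" where
  "mat_sqrt A = (THE B. transpose B = B \<and> pos_def_mat B \<and> B ** B = A)"

definition lower_triangular :: "real^('n::{finite,linorder})^('n::{finite,linorder}) \<Rightarrow> bool" where
  "lower_triangular L \<longleftrightarrow> (\<forall>i j. i < j \<longrightarrow> L $ i $ j = 0)"

definition cholesky_W :: "real^('n::{finite,linorder})^('n::{finite,linorder}) \<Rightarrow> real^('n::{finite,linorder})^('n::{finite,linorder})" where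
  "cholesky_W \<Sigma> = transpose (THE L. lower_triangular L \<and> (\<forall>i. L $ i $ i > 0)
       \<and> L ** transpose L = matrix_inv \<Sigma>)"

definition corr_mat :: "real^'n^'n \<Rightarrow> real^'n^'n" where
  "corr_mat \<Sigma> = (\<chi> i j. \<Sigma> $ i $ j / sqrt (\<Sigma> $ i $ i * \<Sigma> $ j $ j))"

definition var_inv_sqrt :: "real^'n^'n \<Rightarrow> real^'n^'n" where
  "var_inv_sqrt \<Sigma> = (\<chi> i j. if i = j then 1 / sqrt (\<Sigma> $ i $ i) else 0)"

definition zca_cor_W :: "real^'n^'n \<Rightarrow> real^'n^'n" where
  "zca_cor_W \<Sigma> = matrix_inv (mat_sqrt (corr_mat \<Sigma>)) ** var_inv_sqrt \<Sigma>"

definition whiten :: "(real^'n^'n \<Rightarrow> real^'n^'n) \<Rightarrow> (real^'n) measure \<Rightarrow> (real^'n) measure" where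
  "whiten Wf \<mu> = law_lin (Wf (cov_mat \<mu>)) \<mu>"

definition whitened_div ::
  "((real^'n) measure \<Rightarrow> (real^'n) measure \<Rightarrow> ennreal) \<Rightarrow> (real^'n^'n \<Rightarrow> real^'n^'n)
     \<Rightarrow> (real^'n) measure \<Rightarrow> (real^'n) measure \<Rightarrow> ennreal" where
  "whitened_div D Wf \<mu> \<nu> = D (whiten Wf \<mu>) (whiten Wf \<nu>)"

definition zolotarev_ideal :: "((real^'n) measure \<Rightarrow> (real^'n) measure \<Rightarrow> ennreal) \<Rightarrow> bool" where
  "zolotarev_ideal D \<longleftrightarrow>
     (\<forall>\<mu> \<nu> \<rho> \<tau>. is_law \<mu> \<longrightarrow> is_law \<nu> \<longrightarrow> is_law \<rho> \<longrightarrow> is_law \<tau> \<longrightarrow>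
        D (law_sum \<mu> \<rho>) (law_sum \<nu> \<tau>) \<le> D \<mu> \<nu> + D \<rho> \<tau>) \<and>
     (\<forall>\<mu> \<nu> c. is_law \<mu> \<longrightarrow> is_law \<nu> \<longrightarrow>
        D (law_scale c \<mu>) (law_scale c \<nu>) = ennreal \<bar>c\<bar> * D \<mu> \<nu>)"

end

theory Submission
  imports Defs
begin

text \<open>If \<open>X\<close> already has identity covariance, both the ZCA-cor and the Cholesky whitening matrix
  are the identity, so \<open>\<D>\<^sub>\<S>\<close> agrees with \<open>\<D>\<close> on \<open>\<P>\<^sub>I\<close>. For independent \<open>X, Z\<close> with identity
  covariance the covariance of \<open>X + Z\<close> is \<open>2 I\<close>, and both processes whiten a scalar covariance
  \<open>c I\<close> by the factor \<open>1 / sqrt c\<close>. Hence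
  \<open>\<D>\<^sub>\<S>(X + Z, Y + W) = \<D>((X + Z) / sqrt 2, (Y + W) / sqrt 2) = \<D>(X + Z, Y + W) / sqrt 2\<close>,
  which is at most \<open>\<D>(X, Y) + \<D>(Z, W) = \<D>\<^sub>\<S>(X, Y) + \<D>\<^sub>\<S>(Z, W)\<close> by the two ideal properties.\<close>

lemma mat_nth: "mat a $ i $ j = (if i = j then a else 0)"
  by (simp add: mat_def)

lemma matrix_vector_mul_mat: "(mat a :: real^'n^'n) *v x = a *\<^sub>R x"
  by (simp add: matrix_vector_mult_def mat_nth vec_eq_iff if_distrib if_distribR cong: if_cong)

lemma matrix_mul_mat: "(mat a :: real^'n^'n) ** mat b = mat (a * b)"
  by (simp add: matrix_eq matrix_vector_mul_mat flip: matrix_vector_mul_assoc)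

lemma matrix_inv_unique:
  fixes A :: "'a::semiring_1^'n^'n"
  assumes "A ** B = mat 1" and "B ** A = mat 1"
  shows "matrix_inv A = B"
  unfolding matrix_inv_def
proof (rule some_equality)
  fix B' assume "A ** B' = mat 1 \<and> B' ** A = mat 1"
  then have "B' = B' ** (A ** B)" "B = (B' ** A) ** B"
    using assms by simp_all
  then show "B' = B" by (simp add: matrix_mul_assoc)
qed (use assms in simp)

lemma matrix_inv_mat: "a \<noteq> 0 \<Longrightarrow> matrix_inv (mat a :: real^'n^'n) = mat (1 / a)"
  by (rule matrix_inv_unique) (simp_all add: matrix_mul_mat)

lemma mat_sqrt_mat:
  assumes "c > 0"
  shows "mat_sqrt (mat c :: real^'n^'n) = mat (sqrt c)"
  unfolding mat_sqrt_def
proof (rule the_equality)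
  show "transpose (mat (sqrt c)) = (mat (sqrt c) :: real^'n^'n) \<and> pos_def_mat (mat (sqrt c) :: real^'n^'n)
        \<and> mat (sqrt c) ** mat (sqrt c) = (mat c :: real^'n^'n)"
    using assms by (simp add: pos_def_mat_def matrix_vector_mul_mat matrix_mul_mat)
next
  fix B :: "real^'n^'n"
  assume B: "transpose B = B \<and> pos_def_mat B \<and> B ** B = mat c"
  have "B *v x = sqrt c *\<^sub>R x" for x
  proof -
    define v where "v = B *v x - sqrt c *\<^sub>R x"
    \<comment> \<open>\<open>v\<close> is an eigenvector of \<open>B\<close> for the negative eigenvalue \<open>- sqrt c\<close>\<close>
    have "B *v v = - sqrt c *\<^sub>R v"
      using B assms
      by (simp add: v_def matrix_vector_mul_assoc matrix_vector_mul_mat algebra_simps)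
    then have "v \<bullet> (B *v v) \<le> 0"
      using assms by simp
    then have "v = 0"
      using B unfolding pos_def_mat_def by (meson not_le)
    then show ?thesis by (simp add: v_def)
  qed
  then show "B = mat (sqrt c)"
    by (simp add: matrix_eq matrix_vector_mul_mat)
qed

lemma zca_cor_W_mat:
  assumes "c > 0"
  shows "zca_cor_W (mat c :: real^'n^'n) = mat (1 / sqrt c)"
proof -
  have "corr_mat (mat c :: real^'n^'n) = mat 1"
    using assms by (simp add: corr_mat_def mat_nth vec_eq_iff real_sqrt_mult[symmetric])
  moreover have "var_inv_sqrt (mat c :: real^'n^'n) = mat (1 / sqrt c)"
    by (simp add: var_inv_sqrt_def mat_nth vec_eq_iff)
  ultimately show ?thesis
    by (simp add: zca_cor_W_def mat_sqrt_mat matrix_inv_mat matrix_mul_mat)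
qed

lemma wfp_less_finite: "wfp ((<) :: 'a::{finite,linorder} \<Rightarrow> 'a \<Rightarrow> bool)"
  by (metis strict_partial_order_wfp_on_finite_set finite asymp_on_less transp_on_less)

lemma sum_UNIV_eq_single:
  fixes f :: "'a::finite \<Rightarrow> 'b::comm_monoid_add"
  assumes "\<And>m. m \<noteq> k \<Longrightarrow> f m = 0"
  shows "sum f UNIV = f k"
proof -
  have "sum f UNIV = sum f {k}"
    by (rule sum.mono_neutral_right) (use assms in auto)
  then show ?thesis by simp
qed

lemma lower_triangular_off_diagonal_zero:
  fixes L :: "real^('n::{finite,linorder})^('n::{finite,linorder})"
  assumes "lower_triangular L" and "\<forall>i. L $ i $ i \<noteq> 0"
    and "\<forall>i j. i \<noteq> j \<longrightarrow> (L ** transpose L) $ i $ j = 0" and "j \<noteq> k"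
  shows "L $ j $ k = 0"
proof -
  have upper: "L $ i $ j = 0" if "i < j" for i j
    using assms(1) that unfolding lower_triangular_def by blast
  \<comment> \<open>Induction over the columns: once the columns left of \<open>k\<close> vanish off the diagonal, row \<open>k\<close>
    of \<open>L\<close> is zero except for \<open>L $ k $ k\<close>, so \<open>(L ** transpose L) $ j $ k = L $ j $ k * L $ k $ k\<close>.\<close>
  have "\<forall>j. j \<noteq> k \<longrightarrow> L $ j $ k = 0" for k
  proof (induction k rule: wfp_induct_rule[OF wfp_less_finite])
    case (1 k)
    have row: "L $ k $ m = 0" if "m \<noteq> k" for m
      using that 1 upper[of k m] by (cases "m < k") auto
    show ?case
    proof (intro allI impI)
      fix j assume "j \<noteq> k"
      have "(L ** transpose L) $ j $ k = L $ j $ k * L $ k $ k"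
        unfolding matrix_matrix_mult_def transpose_def by (simp add: sum_UNIV_eq_single[where k = k] row)
      then show "L $ j $ k = 0"
        using assms(2,3) \<open>j \<noteq> k\<close> by simp
    qed
  qed
  then show ?thesis
    using assms(4) by blast
qed

lemma cholesky_factor_mat:
  fixes L :: "real^('n::{finite,linorder})^('n::{finite,linorder})"
  assumes "lower_triangular L" and pos: "\<forall>i. L $ i $ i > 0" and LL: "L ** transpose L = mat d"
  shows "L = mat (sqrt d)"
proof -
  have "\<forall>i. L $ i $ i \<noteq> 0"
    using pos by (metis less_irrefl)
  then have off_diag: "L $ j $ k = 0" if "j \<noteq> k" for j k
    using lower_triangular_off_diagonal_zero[OF assms(1) _ _ that] LL by (simp add: mat_nth)
  have "L $ k $ k * L $ k $ k = d" for k
  proof -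
    have "(L ** transpose L) $ k $ k = L $ k $ k * L $ k $ k"
      unfolding matrix_matrix_mult_def transpose_def by (simp add: sum_UNIV_eq_single[where k = k] off_diag)
    then show ?thesis
      using LL by (simp add: mat_nth)
  qed
  then have "L $ k $ k = sqrt d" for k
    using pos by (metis abs_of_pos real_sqrt_abs2)
  then show ?thesis
    by (simp add: vec_eq_iff mat_nth off_diag)
qed

lemma cholesky_W_mat:
  assumes "c > 0"
  shows "cholesky_W (mat c :: real^('n::{finite,linorder})^('n::{finite,linorder})) = mat (1 / sqrt c)"
proof -
  have "lower_triangular L \<and> (\<forall>i. L $ i $ i > 0) \<and> L ** transpose L = matrix_inv (mat c)
      \<longleftrightarrow> L = mat (1 / sqrt c)" for L :: "real^('n::{finite,linorder})^('n::{finite,linorder})"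
  proof
    assume "lower_triangular L \<and> (\<forall>i. L $ i $ i > 0) \<and> L ** transpose L = matrix_inv (mat c)"
    then show "L = mat (1 / sqrt c)"
      using assms cholesky_factor_mat[of L "1 / c"] by (simp add: matrix_inv_mat real_sqrt_divide)
  next
    have "1 / sqrt c * (1 / sqrt c) = 1 / c"
      using assms by (simp add: field_simps)
    moreover assume "L = mat (1 / sqrt c)"
    ultimately show "lower_triangular L \<and> (\<forall>i. L $ i $ i > 0) \<and> L ** transpose L = matrix_inv (mat c)"
      using assms by (simp add: lower_triangular_def mat_nth matrix_mul_mat matrix_inv_mat)
  qed
  then show ?thesis
    by (simp add: cholesky_W_def)
qed

lemma (in pair_sigma_finite)
  fixes f :: "'a \<Rightarrow> real" and g :: "'b \<Rightarrow> real"
  assumes f: "integrable M1 f" and g: "integrable M2 g"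
  shows integrable_fst_snd_mult: "integrable (M1 \<Otimes>\<^sub>M M2) (\<lambda>z. f (fst z) * g (snd z))"
    and integral_fst_snd_mult:
      "(\<integral>z. f (fst z) * g (snd z) \<partial>(M1 \<Otimes>\<^sub>M M2)) = (\<integral>x. f x \<partial>M1) * (\<integral>y. g y \<partial>M2)"
proof -
  have [measurable]: "f \<in> borel_measurable M1" "g \<in> borel_measurable M2"
    using f g by auto
  have "(\<integral>\<^sup>+ z. ennreal (norm (f (fst z) * g (snd z))) \<partial>(M1 \<Otimes>\<^sub>M M2))
      = (\<integral>\<^sup>+ x. \<integral>\<^sup>+ y. ennreal (norm (f x)) * ennreal (norm (g y)) \<partial>M2 \<partial>M1)"
    by (subst M2.nn_integral_fst[symmetric]) (auto simp: abs_mult ennreal_mult)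
  also have "\<dots> = (\<integral>\<^sup>+ x. ennreal (norm (f x)) \<partial>M1) * (\<integral>\<^sup>+ y. ennreal (norm (g y)) \<partial>M2)"
    by (simp add: nn_integral_cmult nn_integral_multc)
  also have "\<dots> < \<infinity>"
    using f g by (simp add: integrable_iff_bounded ennreal_mult_less_top)
  finally show int: "integrable (M1 \<Otimes>\<^sub>M M2) (\<lambda>z. f (fst z) * g (snd z))"
    by (simp add: integrable_iff_bounded)
  show "(\<integral>z. f (fst z) * g (snd z) \<partial>(M1 \<Otimes>\<^sub>M M2)) = (\<integral>x. f x \<partial>M1) * (\<integral>y. g y \<partial>M2)"
    using integral_fst'[OF int] by simp
qed

lemma measurable_law:
  assumes "is_law \<mu>"
  shows "measurable \<mu> N = measurable borel N"
  using assms by (intro measurable_cong_sets) (simp_all add: is_law_def)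

lemma pair_prob_space_laws:
  assumes "is_law \<mu>" and "is_law \<nu>"
  shows "pair_prob_space \<mu> \<nu>"
  using assms by (simp add: is_law_def pair_prob_space_def pair_sigma_finite_def prob_space_imp_sigma_finite)

lemma measurable_add_pair_law:
  assumes "is_law \<mu>" and "is_law \<nu>"
  shows "(\<lambda>(x, y). x + y) \<in> borel_measurable (\<mu> \<Otimes>\<^sub>M \<nu>)"
proof -
  have "sets (\<mu> \<Otimes>\<^sub>M \<nu>) = sets (borel \<Otimes>\<^sub>M borel)"
    using assms by (intro sets_pair_measure_cong) (simp_all add: is_law_def)
  then have pair_borel: "borel_measurable (\<mu> \<Otimes>\<^sub>M \<nu>) = borel_measurable (borel \<Otimes>\<^sub>M borel)"
    by (rule measurable_cong_sets) simp
  show ?thesis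
    unfolding pair_borel by measurable
qed

lemma is_law_law_sum:
  assumes "is_law \<mu>" and "is_law \<nu>"
  shows "is_law (law_sum \<mu> \<nu>)"
proof -
  interpret pair_prob_space \<mu> \<nu>
    using assms by (rule pair_prob_space_laws)
  show ?thesis
    using prob_space_distr[OF measurable_add_pair_law[OF assms]] by (simp add: is_law_def law_sum_def)
qed

lemma integral_law_sum:
  fixes g :: "real^'n \<Rightarrow> real"
  assumes "is_law \<mu>" and "is_law \<nu>" and "g \<in> borel_measurable borel"
  shows "integral\<^sup>L (law_sum \<mu> \<nu>) g = (\<integral>z. g (fst z + snd z) \<partial>(\<mu> \<Otimes>\<^sub>M \<nu>))"
  by (simp add: law_sum_def integral_distr[OF measurable_add_pair_law[OF assms(1,2)] assms(3)] case_prod_beta)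

lemma
  assumes "is_law \<mu>" and "finite_second_moments \<mu>"
  shows integrable_component: "integrable \<mu> (\<lambda>x. x $ i)"
    and integrable_component_mult: "integrable \<mu> (\<lambda>x. x $ i * x $ j)"
proof -
  interpret prob_space \<mu>
    using assms(1) by (simp add: is_law_def)
  have [measurable]: "(\<lambda>x. x $ k) \<in> borel_measurable \<mu>" for k
    unfolding measurable_law[OF assms(1)] by measurable
  have square: "integrable \<mu> (\<lambda>x. (x $ k)\<^sup>2)" for k
    using assms(2) by (simp add: finite_second_moments_def)
  show "integrable \<mu> (\<lambda>x. x $ i)"
    by (rule square_integrable_imp_integrable[OF _ square]) measurable
  have bound: "\<bar>a * b\<bar> \<le> a\<^sup>2 + b\<^sup>2" for a b :: real
    using sum_squares_bound[of "\<bar>a\<bar>" "\<bar>b\<bar>"] mult_nonneg_nonneg[OF abs_ge_zero abs_ge_zero, of a b]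
    unfolding abs_mult power2_abs by linarith
  show "integrable \<mu> (\<lambda>x. x $ i * x $ j)"
  proof (rule Bochner_Integration.integrable_bound)
    show "integrable \<mu> (\<lambda>x. (x $ i)\<^sup>2 + (x $ j)\<^sup>2)"
      using square by simp
    show "AE x in \<mu>. norm (x $ i * x $ j) \<le> norm ((x $ i)\<^sup>2 + (x $ j)\<^sup>2)"
      using bound by (intro AE_I2) simp
  qed measurable
qed

lemma (in pair_prob_space)
  fixes f :: "'a \<Rightarrow> real" and g :: "'b \<Rightarrow> real"
  assumes "integrable M1 f" and "integrable M2 g"
  shows integrable_fst_comp: "integrable (M1 \<Otimes>\<^sub>M M2) (\<lambda>z. f (fst z))"
    and integral_fst_comp: "(\<integral>z. f (fst z) \<partial>(M1 \<Otimes>\<^sub>M M2)) = integral\<^sup>L M1 f"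
    and integrable_snd_comp: "integrable (M1 \<Otimes>\<^sub>M M2) (\<lambda>z. g (snd z))"
    and integral_snd_comp: "(\<integral>z. g (snd z) \<partial>(M1 \<Otimes>\<^sub>M M2)) = integral\<^sup>L M2 g"
  using integrable_fst_snd_mult[OF assms(1), of "\<lambda>_. 1"] integral_fst_snd_mult[OF assms(1), of "\<lambda>_. 1"]
    integrable_fst_snd_mult[OF _ assms(2), of "\<lambda>_. 1"] integral_fst_snd_mult[OF _ assms(2), of "\<lambda>_. 1"]
  by (simp_all add: M1.prob_space M2.prob_space)

lemma mean_vec_law_sum:
  assumes "is_law \<mu>" and "is_law \<nu>" and "finite_second_moments \<mu>" and "finite_second_moments \<nu>"
  shows "mean_vec (law_sum \<mu> \<nu>) = mean_vec \<mu> + mean_vec \<nu>"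
proof -
  interpret pair_prob_space \<mu> \<nu>
    using assms(1,2) by (rule pair_prob_space_laws)
  note int\<mu> = integrable_component[OF assms(1,3)] and int\<nu> = integrable_component[OF assms(2,4)]
  have "(\<integral>z. (fst z + snd z) $ i \<partial>(\<mu> \<Otimes>\<^sub>M \<nu>)) = mean_vec \<mu> $ i + mean_vec \<nu> $ i" for i
    using integrable_fst_comp[OF int\<mu> int\<nu>] integrable_snd_comp[OF int\<mu> int\<nu>]
      integral_fst_comp[OF int\<mu> int\<nu>] integral_snd_comp[OF int\<mu> int\<nu>]
    by (simp add: mean_vec_def)
  then show ?thesis
    using assms(1,2) by (simp add: vec_eq_iff mean_vec_def integral_law_sum)
qed

lemma cov_mat_law_sum:
  assumes "is_law \<mu>" and "is_law \<nu>" and "finite_second_moments \<mu>" and "finite_second_moments \<nu>"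
  shows "cov_mat (law_sum \<mu> \<nu>) = cov_mat \<mu> + cov_mat \<nu>"
proof -
  interpret pair_prob_space \<mu> \<nu>
    using assms(1,2) by (rule pair_prob_space_laws)
  define a where "a k x = x $ k - mean_vec \<mu> $ k" for k x
  define b where "b k y = y $ k - mean_vec \<nu> $ k" for k y
  have a: "integrable \<mu> (\<lambda>x. a k x)" "(\<integral>x. a k x \<partial>\<mu>) = 0" "integrable \<mu> (\<lambda>x. a k x * a l x)" for k l
    using integrable_component[OF assms(1,3)] integrable_component_mult[OF assms(1,3)] assms(1)
    by (simp_all add: a_def algebra_simps mean_vec_def is_law_def prob_space.prob_space)
  have b: "integrable \<nu> (\<lambda>y. b k y)" "(\<integral>y. b k y \<partial>\<nu>) = 0" "integrable \<nu> (\<lambda>y. b k y * b l y)" for k l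
    using integrable_component[OF assms(2,4)] integrable_component_mult[OF assms(2,4)] assms(2)
    by (simp_all add: b_def algebra_simps mean_vec_def is_law_def prob_space.prob_space)
  have "cov_mat (law_sum \<mu> \<nu>) $ i $ j = cov_mat \<mu> $ i $ j + cov_mat \<nu> $ i $ j" for i j
  proof -
    let ?P = "\<mu> \<Otimes>\<^sub>M \<nu>"
    have "cov_mat (law_sum \<mu> \<nu>) $ i $ j = (\<integral>z. (a i (fst z) + b i (snd z)) * (a j (fst z) + b j (snd z)) \<partial>?P)"
      using assms by (simp add: cov_mat_def mean_vec_law_sum integral_law_sum a_def b_def algebra_simps)
    also have "\<dots> = (\<integral>z. a i (fst z) * a j (fst z) \<partial>?P) + (\<integral>z. a i (fst z) * b j (snd z) \<partial>?P)
        + (\<integral>z. a j (fst z) * b i (snd z) \<partial>?P) + (\<integral>z. b i (snd z) * b j (snd z) \<partial>?P)"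
      using a b integrable_fst_comp[OF a(3) b(3)] integrable_snd_comp[OF a(3) b(3)]
        integrable_fst_snd_mult[OF a(1) b(1)]
      by (simp add: algebra_simps)
    \<comment> \<open>the mixed terms vanish: on the product measure they factorise into centred means\<close>
    also have "\<dots> = cov_mat \<mu> $ i $ j + cov_mat \<nu> $ i $ j"
      using a b integral_fst_comp[OF a(3) b(3)] integral_snd_comp[OF a(3) b(3)]
        integral_fst_snd_mult[OF a(1) b(1)]
      by (simp add: cov_mat_def a_def b_def)
    finally show ?thesis .
  qed
  then show ?thesis
    by (simp add: vec_eq_iff)
qed

lemma cov_mat_law_sum_identity_cov:
  assumes "identity_cov \<mu>" and "identity_cov \<nu>"
  shows "cov_mat (law_sum \<mu> \<nu>) = mat 2"
  using assms cov_mat_law_sum[of \<mu> \<nu>]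
  by (simp add: identity_cov_def vec_eq_iff mat_nth)

lemma whitening_matrix_mat:
  assumes "Wf = zca_cor_W \<or> Wf = cholesky_W" and "c > 0"
  shows "Wf (mat c :: real^('n::{finite,linorder})^('n::{finite,linorder})) = mat (1 / sqrt c)"
  using assms zca_cor_W_mat cholesky_W_mat by metis

lemma whiten_scalar_cov:
  assumes "Wf = zca_cor_W \<or> Wf = cholesky_W" and "c > 0" and "cov_mat \<mu> = mat c"
  shows "whiten Wf \<mu> = law_scale (1 / sqrt c) \<mu>"
  using assms by (simp add: whiten_def law_lin_def law_scale_def whitening_matrix_mat matrix_vector_mul_mat)

lemma whiten_identity_cov:
  assumes "Wf = zca_cor_W \<or> Wf = cholesky_W" and "identity_cov \<mu>"
  shows "whiten Wf \<mu> = \<mu>"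
  using assms whiten_scalar_cov[OF assms(1), of 1 \<mu>]
  by (simp add: identity_cov_def is_law_def law_scale_def distr_id2)

lemma whiten_law_sum_identity_cov:
  assumes "Wf = zca_cor_W \<or> Wf = cholesky_W" and "identity_cov \<mu>" and "identity_cov \<nu>"
  shows "whiten Wf (law_sum \<mu> \<nu>) = law_scale (1 / sqrt 2) (law_sum \<mu> \<nu>)"
  using whiten_scalar_cov[OF assms(1)] cov_mat_law_sum_identity_cov[OF assms(2,3)] by simp

lemma zolotarev_ideal_law_sum:
  assumes "zolotarev_ideal D" and "is_law \<mu>" "is_law \<nu>" "is_law \<rho>" "is_law \<tau>"
  shows "D (law_sum \<mu> \<rho>) (law_sum \<nu> \<tau>) \<le> D \<mu> \<nu> + D \<rho> \<tau>"
  using assms unfolding zolotarev_ideal_def by blast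

lemma zolotarev_ideal_contraction:
  assumes "zolotarev_ideal D" and "is_law \<mu>" "is_law \<nu>" and "\<bar>c\<bar> \<le> 1"
  shows "D (law_scale c \<mu>) (law_scale c \<nu>) \<le> D \<mu> \<nu>"
proof -
  have "D (law_scale c \<mu>) (law_scale c \<nu>) = ennreal \<bar>c\<bar> * D \<mu> \<nu>"
    using assms unfolding zolotarev_ideal_def by blast
  also have "\<dots> \<le> 1 * D \<mu> \<nu>"
    using assms(4) by (intro mult_right_mono) (simp_all add: ennreal_le_1)
  finally show ?thesis by simp
qed

theorem mainTheorem11:
  fixes D :: "(real^('n::{finite,linorder})) measure \<Rightarrow> (real^('n::{finite,linorder})) measure \<Rightarrow> ennreal"
    and Wf :: "real^('n::{finite,linorder})^('n::{finite,linorder}) \<Rightarrow> real^('n::{finite,linorder})^('n::{finite,linorder})"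
    and \<mu>X \<mu>Y \<mu>Z \<mu>W :: "(real^('n::{finite,linorder})) measure"
  assumes "Wf = zca_cor_W \<or> Wf = cholesky_W"
    and "zolotarev_ideal D"
    and "identity_cov \<mu>X" and "identity_cov \<mu>Y" and "identity_cov \<mu>Z" and "identity_cov \<mu>W"
  shows "whitened_div D Wf (law_sum \<mu>X \<mu>Z) (law_sum \<mu>Y \<mu>W)
           \<le> whitened_div D Wf \<mu>X \<mu>Y + whitened_div D Wf \<mu>Z \<mu>W"
proof -
  have laws: "is_law \<mu>X" "is_law \<mu>Y" "is_law \<mu>Z" "is_law \<mu>W"
    using assms(3-6) by (simp_all add: identity_cov_def)
  have "whitened_div D Wf (law_sum \<mu>X \<mu>Z) (law_sum \<mu>Y \<mu>W)
      = D (law_scale (1 / sqrt 2) (law_sum \<mu>X \<mu>Z)) (law_scale (1 / sqrt 2) (law_sum \<mu>Y \<mu>W))"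
    by (simp add: whitened_div_def whiten_law_sum_identity_cov assms)
  also have "\<dots> \<le> D (law_sum \<mu>X \<mu>Z) (law_sum \<mu>Y \<mu>W)"
    using laws by (intro zolotarev_ideal_contraction assms(2) is_law_law_sum) simp_all
  also have "\<dots> \<le> D \<mu>X \<mu>Y + D \<mu>Z \<mu>W"
    using assms(2) laws by (rule zolotarev_ideal_law_sum)
  also have "\<dots> = whitened_div D Wf \<mu>X \<mu>Y + whitened_div D Wf \<mu>Z \<mu>W"
    by (simp add: whitened_div_def whiten_identity_cov assms)
  finally show ?thesis .
qed

end
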